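(* Let $n_1,n_2$ be distinct odd primes with $\gcd(n_1-1,n_2-1)=6$, $n=n_1n_2$, and let $D_0,\dots,D_5$ be the Whiteman generalized cyclotomic classes of order 6 modulo $n$ (see context). Let $q$ be a power of a prime $p$ with $\gcd(q,n)=1$ and let $\beta$ be a primitive $n$-th root of unity in an extension of $\mathrm{GF}(q)$. Let $N_1=\{n_1,2n_1,\dots,(n_2-1)n_1\}$ and $N_2=\{n_2,2n_2,\dots,(n_1-1)n_2\}$. Then for every $0\le j\le 5$, $$\sum_{i\in D_j}\beta^{ai}=\begin{cases}-\frac{n_1-1}{6}\bmod p, & a\in N_1,\\ -\frac{n_2-1}{6}\bmod p, & a\in N_2.\end{cases}$$
   Context: Let $e=(n_1-1)(n_2-1)/6$, $g$ a common primitive root of $n_1$ and $n_2$, $u$ an integer with $u\equiv g\pmod{n_1}$, $u\equiv 1\pmod{n_2}$, and $D_i=\{g^su^i\bmod n: s=0,\dots,e-1\}$ for $i=0,\dots,5$. An integer "mod $p$" denotes its image in the prime field $\mathrm{GF}(p)$. *)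

theory Defs
  imports "HOL-Number_Theory.Number_Theory"
begin

definition whiteman_e :: "nat \<Rightarrow> nat \<Rightarrow> nat" where
  "whiteman_e n1 n2 = (n1 - 1) * (n2 - 1) div 6"

definition whiteman_class :: "nat \<Rightarrow> nat \<Rightarrow> nat \<Rightarrow> int \<Rightarrow> nat \<Rightarrow> nat set" where
  "whiteman_class n1 n2 g u i =
     {nat ((int g ^ s * u ^ i) mod int (n1 * n2)) | s. s < whiteman_e n1 n2}"

end

theory Submission imports Defs begin

text \<open>Let f s = g^s u^j mod n, so that D_j is the image of {..<e} under f. Modulo n1 we have
  f s \<equiv> g^(s+j) and modulo n2 we have f s \<equiv> g^s; since e = lcm (n1-1) (n2-1), f is injective
  on {..<e}. For a = t n1 the element \<delta> = \<beta>^a is a nontrivial n2-th root of unity, so \<delta>^(f s)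
  only depends on g^s mod n2. As s runs through the e = (n1-1)/6 \<cdot> (n2-1) values, g^s mod n2
  runs (n1-1)/6 times through all of 1, ..., n2-1, and each round contributes
  \<delta> + ... + \<delta>^(n2-1) = -1. The case a = t n2 is symmetric, with the roles of g^(s+j) and g^s swapped.\<close>

lemma power_eq_power_mod:
  fixes x :: "'a::monoid_mult"
  assumes "x ^ r = 1"
  shows "x ^ k = x ^ (k mod r)"
proof -
  have "x ^ k = x ^ (r * (k div r) + k mod r)" by simp
  also have "\<dots> = x ^ (k mod r)" by (simp only: power_add power_mult assms power_one mult_1)
  finally show ?thesis .
qed

lemma sum_nontrivial_root_of_unity_powers:
  fixes \<delta> :: "'a::field"
  assumes "\<delta> ^ r = 1" "\<delta> \<noteq> 1" "0 < r"
  shows "(\<Sum>x\<in>{1..<r}. \<delta> ^ x) = -1"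
proof -
  have "(\<Sum>x<r. \<delta> ^ x) = 0" using assms by (simp add: sum_gp_strict)
  moreover have "{..<r} = insert 0 {1..<r}" using assms by auto
  ultimately show ?thesis by (simp add: eq_neg_iff_add_eq_0 add.commute)
qed

lemma sum_lessThan_mult_periodic:
  fixes f :: "nat \<Rightarrow> 'a::semiring_1"
  assumes "\<And>s. f (s + d) = f s"
  shows "(\<Sum>s<c * d. f s) = of_nat c * (\<Sum>s<d. f s)"
proof -
  have periodic: "f (s + m * d) = f s" for m s
  proof (induction m)
    case (Suc m)
    have "f (s + Suc m * d) = f (s + m * d + d)" by (simp add: ac_simps)
    with Suc show ?case by (simp only: assms)
  qed simp
  have "(\<Sum>s\<in>{m * d..<m * d + d}. f s) = (\<Sum>s<d. f s)" for m
  proof -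
    have "{m * d..<m * d + d} = {0 + m * d..<d + m * d}" by (simp add: add.commute)
    then show ?thesis
      by (simp only: sum.shift_bounds_nat_ivl atLeast0LessThan periodic)
  qed
  with sum.nat_group[of f d c, symmetric] show ?thesis by simp
qed

lemma primroot_powers_bij:
  assumes "prime r" "residue_primroot r h"
  shows "bij_betw (\<lambda>s. h ^ (s + j) mod r) {..<r - 1} {1..<r}"
proof -
  have cop: "coprime r h" and ord: "ord r h = r - 1"
    using assms by (auto simp: residue_primroot_def totient_prime)
  have inj: "inj_on (\<lambda>s. h ^ (s + j) mod r) {..<r - 1}"
  proof (rule inj_onI)
    fix x y assume "x \<in> {..<r - 1}" "y \<in> {..<r - 1}" "h ^ (x + j) mod r = h ^ (y + j) mod r"
    then have "[h ^ (x + j) = h ^ (y + j)] (mod r)" "x < r - 1" "y < r - 1"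
      by (auto simp: cong_def)
    then have "[x = y] (mod r - 1)" "x < r - 1" "y < r - 1"
      using order_divides_expdiff[OF cop] ord by (auto simp: cong_add_rcancel_nat)
    then show "x = y" by (simp add: cong_def)
  qed
  have "h ^ (s + j) mod r \<in> {1..<r}" for s
  proof -
    have "\<not> r dvd h ^ (s + j)"
      using cop assms(1) by (metis coprime_absorb_left coprime_power_right_iff not_prime_unit)
    then show ?thesis using prime_gt_0_nat[OF assms(1)] by (auto simp: dvd_eq_mod_eq_0)
  qed
  then have "(\<lambda>s. h ^ (s + j) mod r) ` {..<r - 1} \<subseteq> {1..<r}" by auto
  moreover have "card ((\<lambda>s. h ^ (s + j) mod r) ` {..<r - 1}) = card {1..<r}"
    using card_image[OF inj] by simp
  ultimately show ?thesis
    using inj by (simp add: bij_betw_def card_subset_eq)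
qed

lemma sum_power_cong_primroot_powers:
  fixes \<delta> :: "'a::field"
  assumes "prime r" "residue_primroot r h" "\<delta> ^ r = 1" "\<delta> \<noteq> 1"
    and F: "\<And>s. [F s = h ^ (s + j)] (mod r)"
  shows "(\<Sum>s<c * (r - 1). \<delta> ^ F s) = - of_nat c"
proof -
  define G where "G s = \<delta> ^ (h ^ (s + j) mod r)" for s
  have cop: "coprime r h" and ord: "ord r h = r - 1"
    using assms(1,2) by (auto simp: residue_primroot_def totient_prime)
  have F_G: "\<delta> ^ F s = G s" for s
    using power_eq_power_mod[OF assms(3), of "F s"] F[of s] by (simp add: G_def cong_def)
  have "[s + (r - 1) + j = s + j] (mod ord r h)" for s
    unfolding ord cong_def by (metis add.commute add.left_commute mod_add_self2)
  then have "[h ^ (s + (r - 1) + j) = h ^ (s + j)] (mod r)" for s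
    using order_divides_expdiff[OF cop] by blast
  then have "G (s + (r - 1)) = G s" for s by (simp add: G_def cong_def)
  then have "(\<Sum>s<c * (r - 1). G s) = of_nat c * (\<Sum>s<r - 1. G s)"
    by (rule sum_lessThan_mult_periodic)
  also have "(\<Sum>s<r - 1. G s) = (\<Sum>x\<in>{1..<r}. \<delta> ^ x)"
    unfolding G_def using sum.reindex_bij_betw[OF primroot_powers_bij[OF assms(1,2)]] by blast
  also have "\<dots> = -1"
    using assms(1,3,4) prime_gt_0_nat by (blast intro: sum_nontrivial_root_of_unity_powers)
  finally show ?thesis by (simp add: F_G)
qed

lemma inj_on_cong_primroot_powers:
  assumes "residue_primroot r1 h" "residue_primroot r2 h"
    and "\<And>s. [F s = h ^ (s + j1)] (mod r1)" "\<And>s. [F s = h ^ (s + j2)] (mod r2)"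
  shows "inj_on F {..<lcm (totient r1) (totient r2)}"
proof (rule inj_onI)
  fix x y assume x: "x \<in> {..<lcm (totient r1) (totient r2)}"
    and y: "y \<in> {..<lcm (totient r1) (totient r2)}" and "F x = F y"
  have "[x = y] (mod totient r)"
    if "residue_primroot r h" "\<And>s. [F s = h ^ (s + i)] (mod r)" for r i
  proof -
    have "[h ^ (x + i) = h ^ (y + i)] (mod r)"
      using that(2)[of x] that(2)[of y] \<open>F x = F y\<close> by (metis cong_sym cong_trans)
    then show ?thesis
      using that(1) order_divides_expdiff
      by (auto simp: residue_primroot_def cong_add_rcancel_nat)
  qed
  then have "[x = y] (mod lcm (totient r1) (totient r2))"
    using assms by (blast intro: cong_cong_lcm_nat)
  then show "x = y" using x y by (simp add: cong_def)
qed

lemma whiteman_class_eq_image: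
  "whiteman_class n1 n2 g u i =
     (\<lambda>s. nat ((int g ^ s * u ^ i) mod int (n1 * n2))) ` {..<whiteman_e n1 n2}"
  by (auto simp: whiteman_class_def)

lemma cong_whiteman_class_elem:
  assumes "[u = int v] (mod int r)" "r dvd n" "0 < n"
  shows "[nat ((int g ^ s * u ^ i) mod int n) = g ^ s * v ^ i] (mod r)"
proof -
  define x where "x = (int g ^ s * u ^ i) mod int n"
  have "[x = int g ^ s * u ^ i] (mod int r)"
    using assms(2) by (simp add: x_def cong_def mod_mod_cancel)
  also have "[int g ^ s * u ^ i = int (g ^ s * v ^ i)] (mod int r)"
    using assms(1) by (simp add: cong_mult cong_pow)
  finally have "[int (nat x) = int (g ^ s * v ^ i)] (mod int r)"
    using assms(3) by (simp add: x_def)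
  then show ?thesis by (simp only: x_def cong_int_iff)
qed

lemma whiteman_e_eq_lcm:
  assumes "gcd (n1 - 1) (n2 - 1) = 6"
  shows "whiteman_e n1 n2 = lcm (n1 - 1) (n2 - 1)"
proof -
  have "(n1 - 1) * (n2 - 1) = 6 * lcm (n1 - 1) (n2 - 1)"
    by (metis prod_gcd_lcm_nat assms)
  then show ?thesis by (simp add: whiteman_e_def)
qed

lemma whiteman_e_eq_mult:
  assumes "6 dvd n1 - 1"
  shows "whiteman_e n1 n2 = (n1 - 1) div 6 * (n2 - 1)"
    and "whiteman_e n2 n1 = (n1 - 1) div 6 * (n2 - 1)"
  using assms by (auto simp: whiteman_e_def dvd_def)

lemma sum_whiteman_class_powers:
  fixes \<delta> :: "'a::field"
  assumes "prime n1" "prime n2" "gcd (n1 - 1) (n2 - 1) = 6"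
    and "residue_primroot n1 g" "residue_primroot n2 g"
    and "[u = int g] (mod int n1)" "[u = 1] (mod int n2)"
  shows "\<delta> ^ n2 = 1 \<Longrightarrow> \<delta> \<noteq> 1 \<Longrightarrow>
           (\<Sum>i\<in>whiteman_class n1 n2 g u j. \<delta> ^ i) = - of_nat ((n1 - 1) div 6)"
    and "\<delta> ^ n1 = 1 \<Longrightarrow> \<delta> \<noteq> 1 \<Longrightarrow>
           (\<Sum>i\<in>whiteman_class n1 n2 g u j. \<delta> ^ i) = - of_nat ((n2 - 1) div 6)"
proof -
  define f where "f = (\<lambda>s. nat ((int g ^ s * u ^ j) mod int (n1 * n2)))"
  have n_pos: "0 < n1 * n2" using assms(1,2) by (simp add: prime_gt_0_nat)
  have f_n1: "[f s = g ^ (s + j)] (mod n1)" for s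
    using cong_whiteman_class_elem[OF assms(6) _ n_pos] by (simp add: f_def power_add)
  have f_n2: "[f s = g ^ (s + 0)] (mod n2)" for s
    using cong_whiteman_class_elem[of u 1 n2 "n1 * n2" g s j] assms(7) n_pos by (simp add: f_def)
  have class_eq: "whiteman_class n1 n2 g u j = f ` {..<whiteman_e n1 n2}"
    unfolding f_def by (rule whiteman_class_eq_image)
  have "inj_on f {..<whiteman_e n1 n2}"
    using inj_on_cong_primroot_powers[OF assms(4,5) f_n1 f_n2] assms(1-3)
    by (simp add: totient_prime whiteman_e_eq_lcm)
  then have sum_eq: "(\<Sum>i\<in>whiteman_class n1 n2 g u j. \<delta> ^ i) = (\<Sum>s<whiteman_e n1 n2. \<delta> ^ f s)"
    by (simp add: class_eq sum.reindex)
  have "6 dvd n1 - 1" "6 dvd n2 - 1" by (metis assms(3) gcd_dvd1 gcd_dvd2)+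
  note e_eq = whiteman_e_eq_mult(1)[OF this(1)] whiteman_e_eq_mult(2)[OF this(2)]
  show "(\<Sum>i\<in>whiteman_class n1 n2 g u j. \<delta> ^ i) = - of_nat ((n1 - 1) div 6)"
    if "\<delta> ^ n2 = 1" "\<delta> \<noteq> 1"
    using sum_power_cong_primroot_powers[OF assms(2,5) that f_n2] by (simp add: sum_eq e_eq(1))
  show "(\<Sum>i\<in>whiteman_class n1 n2 g u j. \<delta> ^ i) = - of_nat ((n2 - 1) div 6)"
    if "\<delta> ^ n1 = 1" "\<delta> \<noteq> 1"
    using sum_power_cong_primroot_powers[OF assms(1,4) that f_n1] by (simp add: sum_eq e_eq(2))
qed

lemma primitive_root_power_nontrivial:
  fixes \<beta> :: "'a::monoid_mult"
  assumes "\<beta> ^ (d * r) = 1" "\<forall>t. 0 < t \<and> t < d * r \<longrightarrow> \<beta> ^ t \<noteq> 1"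
    and "0 < d" "1 \<le> t" "t < r"
  shows "(\<beta> ^ (t * d)) ^ r = 1" "\<beta> ^ (t * d) \<noteq> 1"
proof -
  have "(\<beta> ^ (t * d)) ^ r = (\<beta> ^ (d * r)) ^ t" by (simp flip: power_mult add: ac_simps)
  then show "(\<beta> ^ (t * d)) ^ r = 1" using assms(1) by simp
  show "\<beta> ^ (t * d) \<noteq> 1" using assms(2-5) by (simp add: mult.commute)
qed

theorem lemma3:
  fixes n1 n2 g p q k m j a :: nat and u :: int and \<beta> :: "'a :: {field, finite}"
  assumes "prime n1" "prime n2" "odd n1" "odd n2" "n1 \<noteq> n2"
    and "gcd (n1 - 1) (n2 - 1) = 6"
    and "residue_primroot n1 g" "residue_primroot n2 g"
    and "[u = int g] (mod int n1)" "[u = 1] (mod int n2)"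
    and "prime p" "k \<ge> 1" "q = p ^ k" "coprime q (n1 * n2)"
    and "m \<ge> 1" "card (UNIV :: 'a set) = q ^ m" "CHAR('a) = p"
    and "\<beta> ^ (n1 * n2) = 1" "\<forall>t. 0 < t \<and> t < n1 * n2 \<longrightarrow> \<beta> ^ t \<noteq> 1"
    and "j \<le> 5"
  shows "(a \<in> {t * n1 | t. 1 \<le> t \<and> t \<le> n2 - 1} \<longrightarrow>
            (\<Sum>i\<in>whiteman_class n1 n2 g u j. \<beta> ^ (a * i)) = - of_nat ((n1 - 1) div 6))
       \<and> (a \<in> {t * n2 | t. 1 \<le> t \<and> t \<le> n1 - 1} \<longrightarrow>
            (\<Sum>i\<in>whiteman_class n1 n2 g u j. \<beta> ^ (a * i)) = - of_nat ((n2 - 1) div 6))"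
proof -
  have n1_pos: "0 < n1" and n2_pos: "0 < n2" using assms(1,2) by (simp_all add: prime_gt_0_nat)
  note class_sums = sum_whiteman_class_powers[OF assms(1,2,6-10), of "\<beta> ^ a"]
  show ?thesis
  proof (intro conjI impI)
    assume "a \<in> {t * n1 | t. 1 \<le> t \<and> t \<le> n2 - 1}"
    then obtain t where "a = t * n1" "1 \<le> t" "t < n2" using n2_pos by fastforce
    then have "(\<beta> ^ a) ^ n2 = 1" "\<beta> ^ a \<noteq> 1"
      using primitive_root_power_nontrivial[OF assms(18,19) n1_pos] by simp_all
    then show "(\<Sum>i\<in>whiteman_class n1 n2 g u j. \<beta> ^ (a * i)) = - of_nat ((n1 - 1) div 6)"
      unfolding power_mult by (rule class_sums(1))
  next
    assume "a \<in> {t * n2 | t. 1 \<le> t \<and> t \<le> n1 - 1}"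
    then obtain t where "a = t * n2" "1 \<le> t" "t < n1" using n1_pos by fastforce
    moreover have "\<beta> ^ (n2 * n1) = 1" using assms(18) by (simp add: mult.commute)
    ultimately have "(\<beta> ^ a) ^ n1 = 1" "\<beta> ^ a \<noteq> 1"
      using primitive_root_power_nontrivial[of \<beta> n2 n1 t] assms(19) n2_pos
      by (simp_all add: mult.commute)
    then show "(\<Sum>i\<in>whiteman_class n1 n2 g u j. \<beta> ^ (a * i)) = - of_nat ((n2 - 1) div 6)"
      unfolding power_mult by (rule class_sums(2))
  qed
qed

end
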